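(* A partial order is unary FA-presentable if and only if it is isomorphic to one obtained by propagating a unary FA-foundational partial order $(Q,\le)$ in which every seed $P_k=\{p^{(k)}_1,\dots,p^{(k)}_5\}$ is either an anti-chain (no two distinct $p^{(k)}_i$ comparable), an ascending chain ($p^{(k)}_1<p^{(k)}_2<p^{(k)}_3<p^{(k)}_4<p^{(k)}_5$), or a descending chain ($p^{(k)}_1>p^{(k)}_2>p^{(k)}_3>p^{(k)}_4>p^{(k)}_5$).
   Context: A structure is unary FA-presentable if there exist a regular language $L\subseteq a^*$ and a surjection $\phi:L\to X$ such that for equality and for the relation, the set of pairs $(u,v)\in L^2$ whose images are related is regular (i.e. the set of words $\mathrm{conv}(u,v)$ over $\{a,\$\}^2$, reading both words in parallel with the shorter padded by $\$$, is a regular language). A unary FA-foundational binary relation is a finite set $Q$ with a relation $\rho$ and pairwise disjoint five-element subsets (seeds) $P_k=\{p^{(k)}_1,\dots,p^{(k)}_5\}$, $0\le k\le n-1$ ($n\ge0$), such that with $Q'=Q\setminus\bigcup_k P_k$, for all $k,l$ (possibly equal) and $q\in Q'$: (1) the statements $p^{(k)}_i\rho p^{(l)}_i$ ($1\le i\le5$) are all true or all false; (2) the statements $p^{(k)}_i\rho p^{(l)}_{i+1}$ ($1\le i\le4$) are all true or all false; (3) the statements $p^{(k)}_{i+1}\rho p^{(l)}_i$ ($1\le i\le 4$) are all true or all false; (4) the statements $p^{(k)}_i\rho p^{(l)}_j$ with $j-i\ge2$ are all true or all false; (5) the statements $p^{(k)}_j\rho p^{(l)}_i$ with $j-i\ge2$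 are all true or all false; (6) the statements $q\rho p^{(k)}_i$ ($2\le i\le5$) are all true or all false; (7) the statements $p^{(k)}_i\rho q$ ($2\le i\le 5$) are all true or all false. A unary FA-foundational partial order is one in which $\rho$ is a partial order on $Q$. Propagation yields $(\hat Q,\hat\rho)$ with $\hat Q=Q'\cup\{p^{(k)}_i:0\le k<n,\ i\in\mathbb{N}\}$ ($\mathbb{N}=\{1,2,\dots\}$, new elements for $i\ge6$) and: $\hat\rho=\rho$ on $Q'$; $p^{(k)}_i\hat\rho p^{(l)}_j$ iff [$j=i$ and $p^{(k)}_1\rho p^{(l)}_1$] or [$j=i+1$ and $p^{(k)}_1\rho p^{(l)}_2$] or [$j=i-1$ and $p^{(k)}_2\rho p^{(l)}_1$] or [$j\ge i+2$ and $p^{(k)}_1\rho p^{(l)}_3$] or [$j\le i-2$ and $p^{(k)}_3\rho p^{(l)}_1$]; for $q\in Q'$: $q\hat\rho p^{(k)}_1$ iff $q\rho p^{(k)}_1$, $q\hat\rho p^{(k)}_i$ ($i\ge2$) iff $q\rho p^{(k)}_2$, $p^{(k)}_1\hat\rho q$ iff $p^{(k)}_1\rho q$, $p^{(k)}_i\hat\rho q$ ($i\ge2$) iff $p^{(k)}_2\rho q$. *)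

theory Defs
  imports Main
begin

definition regular :: "'s list set \<Rightarrow> bool" where
  "regular L \<longleftrightarrow>
     (\<exists>(S::nat set) s0 (\<delta>::nat \<Rightarrow> 's \<Rightarrow> nat) F.
        finite S \<and> s0 \<in> S \<and> (\<forall>s\<in>S. \<forall>x. \<delta> s x \<in> S) \<and>
        L = {w. foldl \<delta> s0 w \<in> F})"

text \<open>Unary words a^m are identified with their length m.\<close>
definition unary_word :: "nat \<Rightarrow> unit list" where
  "unary_word m = replicate m ()"

definition regular_unary :: "nat set \<Rightarrow> bool" where
  "regular_unary L \<longleftrightarrow> regular (unary_word ` L)"

text \<open>Convolution of a^m and a^n over the alphabet {a,\$}^2; the letter a is coded
  by True and the padding symbol \$ by False.\<close>
definition conv :: "nat \<Rightarrow> nat \<Rightarrow> (bool \<times> bool) list" where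
  "conv m n = map (\<lambda>i. (i < m, i < n)) [0..<max m n]"

definition unary_FA_presentable :: "'a set \<Rightarrow> ('a \<times> 'a) set \<Rightarrow> bool" where
  "unary_FA_presentable X R \<longleftrightarrow>
     (\<exists>(L::nat set) (\<phi>::nat \<Rightarrow> 'a).
        regular_unary L \<and> \<phi> ` L = X \<and>
        regular {conv u v | u v. u \<in> L \<and> v \<in> L \<and> \<phi> u = \<phi> v} \<and>
        regular {conv u v | u v. u \<in> L \<and> v \<in> L \<and> (\<phi> u, \<phi> v) \<in> R})"

text \<open>The finite set Q (w.l.o.g. a set of naturals), relation rho, n seeds;
  p k i is the element p^(k)_i for k < n and 1 \<le> i \<le> 5.\<close>

definition seed_set :: "nat \<Rightarrow> (nat \<Rightarrow> nat \<Rightarrow> nat) \<Rightarrow> nat set" where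
  "seed_set n p = (\<lambda>(k,i). p k i) ` ({..<n} \<times> {1..5})"

definition unary_FA_foundational ::
  "nat set \<Rightarrow> (nat \<times> nat) set \<Rightarrow> nat \<Rightarrow> (nat \<Rightarrow> nat \<Rightarrow> nat) \<Rightarrow> bool" where
  "unary_FA_foundational Q \<rho> n p \<longleftrightarrow>
     finite Q \<and> \<rho> \<subseteq> Q \<times> Q \<and>
     seed_set n p \<subseteq> Q \<and>
     inj_on (\<lambda>(k,i). p k i) ({..<n} \<times> {1..5}) \<and>
     (\<forall>k<n. \<forall>l<n.
        (\<forall>i\<in>{1..5}. \<forall>j\<in>{1..5}. (p k i, p l i) \<in> \<rho> \<longleftrightarrow> (p k j, p l j) \<in> \<rho>) \<and>
        (\<forall>i\<in>{1..4}. \<forall>j\<in>{1..4}. (p k i, p l (i+1)) \<in> \<rho> \<longleftrightarrow> (p k j, p l (j+1)) \<in> \<rho>) \<and>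
        (\<forall>i\<in>{1..4}. \<forall>j\<in>{1..4}. (p k (i+1), p l i) \<in> \<rho> \<longleftrightarrow> (p k (j+1), p l j) \<in> \<rho>) \<and>
        (\<forall>i j i' j'. 1 \<le> i \<and> i + 2 \<le> j \<and> j \<le> 5 \<and> 1 \<le> i' \<and> i' + 2 \<le> j' \<and> j' \<le> 5 \<longrightarrow>
           ((p k i, p l j) \<in> \<rho> \<longleftrightarrow> (p k i', p l j') \<in> \<rho>)) \<and>
        (\<forall>i j i' j'. 1 \<le> i \<and> i + 2 \<le> j \<and> j \<le> 5 \<and> 1 \<le> i' \<and> i' + 2 \<le> j' \<and> j' \<le> 5 \<longrightarrow>
           ((p k j, p l i) \<in> \<rho> \<longleftrightarrow> (p k j', p l i') \<in> \<rho>))) \<and>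
     (\<forall>k<n. \<forall>q\<in>Q - seed_set n p.
        (\<forall>i\<in>{2..5}. \<forall>j\<in>{2..5}. (q, p k i) \<in> \<rho> \<longleftrightarrow> (q, p k j) \<in> \<rho>) \<and>
        (\<forall>i\<in>{2..5}. \<forall>j\<in>{2..5}. (p k i, q) \<in> \<rho> \<longleftrightarrow> (p k j, q) \<in> \<rho>))"

definition unary_FA_foundational_po ::
  "nat set \<Rightarrow> (nat \<times> nat) set \<Rightarrow> nat \<Rightarrow> (nat \<Rightarrow> nat \<Rightarrow> nat) \<Rightarrow> bool" where
  "unary_FA_foundational_po Q \<rho> n p \<longleftrightarrow>
     unary_FA_foundational Q \<rho> n p \<and> partial_order_on Q \<rho>"

definition seed_antichain :: "(nat \<times> nat) set \<Rightarrow> (nat \<Rightarrow> nat \<Rightarrow> nat) \<Rightarrow> nat \<Rightarrow> bool" where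
  "seed_antichain \<rho> p k \<longleftrightarrow>
     (\<forall>i\<in>{1..5}. \<forall>j\<in>{1..5}. p k i \<noteq> p k j \<longrightarrow> (p k i, p k j) \<notin> \<rho>)"

definition seed_ascending :: "(nat \<times> nat) set \<Rightarrow> (nat \<Rightarrow> nat \<Rightarrow> nat) \<Rightarrow> nat \<Rightarrow> bool" where
  "seed_ascending \<rho> p k \<longleftrightarrow>
     (\<forall>i\<in>{1..4}. (p k i, p k (i+1)) \<in> \<rho> \<and> p k i \<noteq> p k (i+1))"

definition seed_descending :: "(nat \<times> nat) set \<Rightarrow> (nat \<Rightarrow> nat \<Rightarrow> nat) \<Rightarrow> nat \<Rightarrow> bool" where
  "seed_descending \<rho> p k \<longleftrightarrow>
     (\<forall>i\<in>{1..4}. (p k (i+1), p k i) \<in> \<rho> \<and> p k i \<noteq> p k (i+1))"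

text \<open>Elements of the propagated structure: Inl q for q \<in> Q', Inr (k,i) for p^(k)_i, i \<ge> 1.\<close>
definition prop_carrier :: "nat set \<Rightarrow> nat \<Rightarrow> (nat \<Rightarrow> nat \<Rightarrow> nat) \<Rightarrow> (nat + nat \<times> nat) set" where
  "prop_carrier Q n p = Inl ` (Q - seed_set n p) \<union> Inr ` {(k,i). k < n \<and> 1 \<le> i}"

definition prop_seed_rel :: "(nat \<times> nat) set \<Rightarrow> (nat \<Rightarrow> nat \<Rightarrow> nat) \<Rightarrow> nat \<Rightarrow> nat \<Rightarrow> nat \<Rightarrow> nat \<Rightarrow> bool" where
  "prop_seed_rel \<rho> p k i l j \<longleftrightarrow>
     (j = i \<and> (p k 1, p l 1) \<in> \<rho>) \<or>
     (j = i + 1 \<and> (p k 1, p l 2) \<in> \<rho>) \<or>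
     (i = j + 1 \<and> (p k 2, p l 1) \<in> \<rho>) \<or>
     (i + 2 \<le> j \<and> (p k 1, p l 3) \<in> \<rho>) \<or>
     (j + 2 \<le> i \<and> (p k 3, p l 1) \<in> \<rho>)"

definition prop_rel :: "nat set \<Rightarrow> (nat \<times> nat) set \<Rightarrow> nat \<Rightarrow> (nat \<Rightarrow> nat \<Rightarrow> nat)
    \<Rightarrow> ((nat + nat \<times> nat) \<times> (nat + nat \<times> nat)) set" where
  "prop_rel Q \<rho> n p =
     {(Inl q, Inl q') | q q'. q \<in> Q - seed_set n p \<and> q' \<in> Q - seed_set n p \<and> (q, q') \<in> \<rho>} \<union>
     {(Inr (k,i), Inr (l,j)) | k i l j. k < n \<and> l < n \<and> 1 \<le> i \<and> 1 \<le> j \<and> prop_seed_rel \<rho> p k i l j} \<union>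
     {(Inl q, Inr (k,i)) | q k i. q \<in> Q - seed_set n p \<and> k < n \<and> 1 \<le> i \<and>
        (if i = 1 then (q, p k 1) \<in> \<rho> else (q, p k 2) \<in> \<rho>)} \<union>
     {(Inr (k,i), Inl q) | q k i. q \<in> Q - seed_set n p \<and> k < n \<and> 1 \<le> i \<and>
        (if i = 1 then (p k 1, q) \<in> \<rho> else (p k 2, q) \<in> \<rho>)}"

definition rel_isomorphic :: "'a set \<Rightarrow> ('a \<times> 'a) set \<Rightarrow> 'b set \<Rightarrow> ('b \<times> 'b) set \<Rightarrow> bool" where
  "rel_isomorphic A R B S \<longleftrightarrow>
     (\<exists>f. bij_betw f A B \<and> (\<forall>x\<in>A. \<forall>y\<in>A. (x, y) \<in> R \<longleftrightarrow> (f x, f y) \<in> S))"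

end

theory Submission
  imports Defs "HOL-Library.FuncSet"
begin

text \<open>Pumping the loops of the automata of a unary FA-presentation shows that equality and
  the relation, read on codes, are ultimately periodic: beyond a threshold \<open>T\<close>, adding the
  period \<open>P\<close> to codes does not matter; conversely an automaton that remembers codes modulo the
  period accepts every ultimately periodic relation.  Propagations are ultimately periodic by
  construction, which gives one direction.  For the other, the codes beyond \<open>T\<close> form \<open>P\<close>
  arithmetic progressions, the tracks.  The entries of a track code either one element or
  pairwise distinct elements, and whether two track entries are related depends only on their
  tracks and on the difference of their levels, truncated at \<open>\<plusminus>2\<close>: this is the information
  a seed of five elements carries.  One representative track per family of overlapping tracks
  yields the seeds, the least codes of the finitely many remaining elements yield \<open>Q'\<close>, and
  periodicity along a single track makes every seed an antichain or a chain.\<close>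

section \<open>Ultimately periodic relations and automata on convolutions\<close>

lemma regular_if_finite_automaton:
  fixes step :: "'q \<Rightarrow> 's \<Rightarrow> 'q"
  assumes "finite A" and "q0 \<in> A" and step_closed: "\<And>q x. q \<in> A \<Longrightarrow> step q x \<in> A"
  shows "regular {w. acc (foldl step q0 w)}"
proof -
  obtain enc :: "'q \<Rightarrow> nat" where enc: "inj_on enc A"
    using \<open>finite A\<close> by (metis finite_imp_inj_to_nat_seg)
  define \<delta> where "\<delta> s x = enc (step (inv_into A enc s) x)" for s x
  have reach: "foldl step q w \<in> A" if "q \<in> A" for q w
    using that by (induction w arbitrary: q) (auto intro: step_closed)
  have simulate: "foldl \<delta> (enc q) w = enc (foldl step q w)" if "q \<in> A" for q w
    using that by (induction w arbitrary: q) (simp_all add: \<delta>_def enc step_closed)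
  have "finite (enc ` A)" "enc q0 \<in> enc ` A" "\<forall>s\<in>enc ` A. \<forall>x. \<delta> s x \<in> enc ` A"
    using assms enc by (auto simp: \<delta>_def)
  moreover have "{w. acc (foldl step q0 w)} = {w. foldl \<delta> (enc q0) w \<in> enc ` {q\<in>A. acc q}}"
    using simulate[OF \<open>q0 \<in> A\<close>] reach[OF \<open>q0 \<in> A\<close>] enc by (auto dest: inj_onD)
  ultimately show ?thesis unfolding regular_def by blast
qed

lemma funpow_eventually_periodic:
  fixes g :: "'x::finite \<Rightarrow> 'b \<Rightarrow> 'b"
  assumes "finite S" and closed: "\<And>x s. s \<in> S \<Longrightarrow> g x s \<in> S"
  obtains T P where "0 < P" "\<And>x s m. s \<in> S \<Longrightarrow> T \<le> m \<Longrightarrow> (g x^^(m + P)) s = (g x^^m) s"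
proof -
  have inS: "(g x^^m) s \<in> S" if "s \<in> S" for x s m
    using that by (induction m) (auto intro: closed)
  define F where "F m = (\<lambda>x. restrict (g x^^m) S)" for m
  have "range F \<subseteq> UNIV \<rightarrow>\<^sub>E (S \<rightarrow>\<^sub>E S)" using inS by (auto simp: F_def)
  then have "finite (range F)"
    by (rule finite_subset) (simp add: finite_PiE \<open>finite S\<close>)
  then have "\<not> inj F" using infinite_UNIV_nat finite_imageD by blast
  then obtain a b where "a < b" "F a = F b"
    unfolding inj_def by (metis linorder_neq_iff)
  then have cycle: "(g x^^b) s = (g x^^a) s" if "s \<in> S" for x s
    using that unfolding F_def by (metis restrict_apply')
  have "(g x^^(m + (b - a))) s = (g x^^m) s" if "s \<in> S" "a \<le> m" for x s m
  proof -
    obtain j where "m = j + a" using \<open>a \<le> m\<close> by (metis add.commute le_Suc_ex)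
    then show ?thesis
      using \<open>a < b\<close> cycle[OF \<open>s \<in> S\<close>] by (simp add: funpow_add)
  qed
  with \<open>a < b\<close> show ?thesis by (intro that[of "b - a" a]) auto
qed

lemma length_conv [simp]: "length (conv u v) = max u v"
  by (simp add: conv_def)

lemma nth_conv: "i < max u v \<Longrightarrow> conv u v ! i = (i < u, i < v)"
  by (simp add: conv_def)

lemma conv_eq_replicate:
  "conv u v = replicate (min u v) (True, True) @
     (if u \<le> v then replicate (v - u) (False, True) else replicate (u - v) (True, False))"
  by (rule nth_equalityI) (auto simp: nth_conv nth_append)

lemma conv_inject: "conv u v = conv u' v' \<longleftrightarrow> u = u' \<and> v = v'"
proof
  have "length (filter fst (conv u v)) = u" "length (filter snd (conv u v)) = v" for u v
    by (simp_all add: conv_eq_replicate)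
  then show "conv u v = conv u' v' \<Longrightarrow> u = u' \<and> v = v'" by metis
qed simp

lemma mem_conv_set_iff: "conv u v \<in> {conv u v | u v. h u v} \<longleftrightarrow> h u v"
  by (auto simp: conv_inject)

lemma conv_snoc_diag: "conv u u @ [(True, True)] = conv (Suc u) (Suc u)"
  and conv_snoc_right: "u \<le> v \<Longrightarrow> conv u v @ [(False, True)] = conv u (Suc v)"
  and conv_snoc_left: "v \<le> u \<Longrightarrow> conv u v @ [(True, False)] = conv (Suc u) v"
  by (auto intro!: nth_equalityI simp: nth_append nth_conv)

lemma foldl_replicate: "foldl f s (replicate n x) = ((\<lambda>s. f s x)^^n) s"
  by (induction n arbitrary: s) (simp_all add: funpow_Suc_right del: funpow.simps)

lemma foldl_conv:
  "foldl \<delta> s (conv u v) = (if u \<le> v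
     then ((\<lambda>s. \<delta> s (False, True))^^(v - u)) (((\<lambda>s. \<delta> s (True, True))^^min u v) s)
     else ((\<lambda>s. \<delta> s (True, False))^^(u - v)) (((\<lambda>s. \<delta> s (True, True))^^min u v) s))"
  by (simp add: conv_eq_replicate foldl_replicate)

text \<open>The three clauses correspond to the three letters \<open>(a,a)\<close>, \<open>($,a)\<close>, \<open>(a,$)\<close> that
  extend a convolution; pumping the respective loop of an automaton by \<open>P\<close> letters is invisible.\<close>

definition ultimately_periodic :: "nat \<Rightarrow> nat \<Rightarrow> (nat \<Rightarrow> nat \<Rightarrow> bool) \<Rightarrow> bool" where
  "ultimately_periodic T P h \<longleftrightarrow> 0 < P \<and>
     (\<forall>u v. T \<le> u \<longrightarrow> T \<le> v \<longrightarrow> h (u + P) (v + P) = h u v) \<and>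
     (\<forall>u v. u + T \<le> v \<longrightarrow> h u (v + P) = h u v) \<and>
     (\<forall>u v. v + T \<le> u \<longrightarrow> h (u + P) v = h u v)"

lemma ultimately_periodic_swap:
  "ultimately_periodic T P h \<Longrightarrow> ultimately_periodic T P (\<lambda>u v. h v u)"
  by (auto simp: ultimately_periodic_def)

context
  fixes T P h
  assumes per: "ultimately_periodic T P h"
begin

lemma ultimately_periodic_shift_both:
  assumes "T \<le> u" "T \<le> v" shows "h (u + k * P) (v + k * P) = h u v"
proof (induction k)
  case (Suc k)
  have "h (u + k * P + P) (v + k * P + P) = h (u + k * P) (v + k * P)"
    using per assms by (simp add: ultimately_periodic_def trans_le_add1)
  with Suc show ?case by (simp add: ac_simps)
qed simp

lemma ultimately_periodic_shift_right:
  assumes "u + T \<le> v" shows "h u (v + k * P) = h u v"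
proof (induction k)
  case (Suc k)
  have "h u (v + k * P + P) = h u (v + k * P)"
    using per assms by (simp add: ultimately_periodic_def trans_le_add1)
  with Suc show ?case by (simp add: ac_simps)
qed simp

lemma ultimately_periodic_shift_left:
  assumes "v + T \<le> u" shows "h (u + k * P) v = h u v"
proof (induction k)
  case (Suc k)
  have "h (u + k * P + P) v = h (u + k * P) v"
    using per assms by (simp add: ultimately_periodic_def trans_le_add1)
  with Suc show ?case by (simp add: ac_simps)
qed simp

lemma ultimately_periodic_mono:
  assumes "T \<le> T'" "0 < k" shows "ultimately_periodic T' (k * P) h"
  unfolding ultimately_periodic_def
proof (intro conjI allI impI)
  show "0 < k * P" using per assms by (simp add: ultimately_periodic_def)
  show "h (u + k * P) (v + k * P) = h u v" if "T' \<le> u" "T' \<le> v" for u v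
    using that assms by (intro ultimately_periodic_shift_both) auto
  show "h u (v + k * P) = h u v" if "u + T' \<le> v" for u v
    using that assms by (intro ultimately_periodic_shift_right) auto
  show "h (u + k * P) v = h u v" if "v + T' \<le> u" for u v
    using that assms by (intro ultimately_periodic_shift_left) auto
qed

end

lemma ultimately_periodic_common:
  assumes "ultimately_periodic T1 P1 h1" "ultimately_periodic T2 P2 h2"
  obtains T P where "T \<le> P" "ultimately_periodic T P h1" "ultimately_periodic T P h2"
proof
  let ?T = "max T1 T2" and ?P = "P1 * P2 * Suc (max T1 T2)"
  have "0 < P1" "0 < P2" using assms by (simp_all add: ultimately_periodic_def)
  then have "1 * Suc ?T \<le> P1 * P2 * Suc ?T" by (intro mult_le_mono1) simp
  then show "?T \<le> ?P" by (simp only: mult_1)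
  have "?P = (P2 * Suc ?T) * P1" "?P = (P1 * Suc ?T) * P2" by (simp_all only: ac_simps)
  with \<open>0 < P1\<close> \<open>0 < P2\<close> show "ultimately_periodic ?T ?P h1" "ultimately_periodic ?T ?P h2"
    using ultimately_periodic_mono[OF assms(1), of ?T "P2 * Suc ?T"]
      ultimately_periodic_mono[OF assms(2), of ?T "P1 * Suc ?T"] by simp_all
qed

lemma regular_imp_ultimately_periodic:
  assumes "regular K"
  obtains T P where "ultimately_periodic T P (\<lambda>u v. conv u v \<in> K)"
proof -
  obtain S :: "nat set" and s0 \<delta> F where S: "finite S" "s0 \<in> S" "\<forall>s\<in>S. \<forall>x. \<delta> s x \<in> S"
    and K: "K = {w. foldl \<delta> s0 w \<in> F}"
    using assms unfolding regular_def by blast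
  define g :: "bool \<times> bool \<Rightarrow> nat \<Rightarrow> nat" where "g x s = \<delta> s x" for x s
  have closed: "g x s \<in> S" if "s \<in> S" for x s using S(3) that unfolding g_def by blast
  have reach: "(g x^^m) s \<in> S" if "s \<in> S" for x s m
    using that by (induction m) (auto intro: closed)
  obtain T P where "0 < P" and period: "\<And>x s m. s \<in> S \<Longrightarrow> T \<le> m \<Longrightarrow> (g x^^(m + P)) s = (g x^^m) s"
    using funpow_eventually_periodic[of S g] S(1) closed by metis
  have run: "foldl \<delta> s0 (conv u v) = (if u \<le> v
      then (g (False, True)^^(v - u)) ((g (True, True)^^min u v) s0)
      else (g (True, False)^^(u - v)) ((g (True, True)^^min u v) s0))" for u v
    by (simp add: foldl_conv g_def[abs_def])
  \<comment> \<open>with threshold \<open>Suc T\<close> the last two clauses exclude \<open>u = v\<close>\<close>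
  have "ultimately_periodic (Suc T) P (\<lambda>u v. conv u v \<in> K)"
    unfolding ultimately_periodic_def K mem_Collect_eq
  proof (intro conjI allI impI)
    show "0 < P" by fact
    show "(foldl \<delta> s0 (conv (u + P) (v + P)) \<in> F) = (foldl \<delta> s0 (conv u v) \<in> F)"
      if "Suc T \<le> u" "Suc T \<le> v" for u v
      using that period[OF S(2), where x = "(True, True)" and m = "min u v"]
      by (cases "u \<le> v") (simp_all add: run min_def)
    show "(foldl \<delta> s0 (conv u (v + P)) \<in> F) = (foldl \<delta> s0 (conv u v) \<in> F)"
      if "u + Suc T \<le> v" for u v
    proof -
      have "v + P - u = (v - u) + P" using that by simp
      then show ?thesis
        using that period[OF reach[OF S(2)], of "v - u"] by (simp add: run)
    qed
    show "(foldl \<delta> s0 (conv (u + P) v) \<in> F) = (foldl \<delta> s0 (conv u v) \<in> F)"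
      if "v + Suc T \<le> u" for u v
    proof -
      have "u + P - v = (u - v) + P" using that by simp
      then show ?thesis
        using that period[OF reach[OF S(2)], of "u - v"] by (simp add: run)
    qed
  qed
  then show ?thesis by (rule that)
qed

definition period_reduce :: "nat \<Rightarrow> nat \<Rightarrow> nat \<Rightarrow> nat" where
  "period_reduce T P x = (if x < T then x else T + (x - T) mod P)"

lemma period_reduce_less: "0 < P \<Longrightarrow> period_reduce T P x < T + P"
  by (simp add: period_reduce_def)

lemma period_reduce_0 [simp]: "period_reduce T P 0 = 0"
  by (simp add: period_reduce_def)

lemma period_reduce_Suc: "period_reduce T P (Suc (period_reduce T P x)) = period_reduce T P (Suc x)"
  by (cases "x < T") (auto simp: period_reduce_def mod_Suc_eq Suc_diff_le)

lemma period_reduce_decomp: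
  "T \<le> x \<Longrightarrow> T \<le> period_reduce T P x \<and> x = period_reduce T P x + (x - T) div P * P"
  by (simp add: period_reduce_def)

lemma ultimately_periodic_reduce:
  assumes per: "ultimately_periodic T P h"
  shows "h a (a + d) = h (period_reduce T P a) (period_reduce T P a + period_reduce T P d)"
proof -
  let ?r = "period_reduce T P"
  have "h a (a + d) = h (?r a) (?r a + d)"
  proof (cases "a < T")
    case False
    with period_reduce_decomp[of T a P] obtain k where k: "T \<le> ?r a" "a = ?r a + k * P" by auto
    have "h (?r a + k * P) (?r a + d + k * P) = h (?r a) (?r a + d)"
      using ultimately_periodic_shift_both[OF per] k(1) by simp
    moreover have "a + d = ?r a + d + k * P" using k(2) by linarith
    ultimately show ?thesis using k(2) by metis
  qed (simp add: period_reduce_def)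
  also have "\<dots> = h (?r a) (?r a + ?r d)"
  proof (cases "d < T")
    case False
    with period_reduce_decomp[of T d P] obtain k where k: "T \<le> ?r d" "d = ?r d + k * P" by auto
    have "h (?r a) (?r a + ?r d + k * P) = h (?r a) (?r a + ?r d)"
      using ultimately_periodic_shift_right[OF per] k(1) by simp
    moreover have "?r a + d = ?r a + ?r d + k * P" using k(2) by linarith
    ultimately show ?thesis by metis
  qed (simp add: period_reduce_def)
  finally show ?thesis .
qed

text \<open>States of an automaton reading \<open>conv u v\<close>: \<open>Diag a\<close> for \<open>u = v\<close>, \<open>Up a b\<close> for
  \<open>v = u + d\<close> and \<open>Down a b\<close> for \<open>u = v + d\<close> with \<open>d > 0\<close>, where \<open>a\<close> and \<open>b\<close> are
  \<open>min u v\<close> and \<open>d\<close> reduced modulo the period; \<open>Sink\<close> rejects non-convolutions.\<close>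

datatype conv_state = Sink | Diag nat | Up nat nat | Down nat nat

fun conv_step :: "(nat \<Rightarrow> nat) \<Rightarrow> conv_state \<Rightarrow> bool \<times> bool \<Rightarrow> conv_state" where
  "conv_step r (Diag a) (True, True) = Diag (r (Suc a))"
| "conv_step r (Diag a) (False, True) = Up a (r 1)"
| "conv_step r (Diag a) (True, False) = Down a (r 1)"
| "conv_step r (Up a b) (False, True) = Up a (r (Suc b))"
| "conv_step r (Down a b) (True, False) = Down a (r (Suc b))"
| "conv_step r _ _ = Sink"

fun conv_accept :: "(nat \<Rightarrow> nat \<Rightarrow> bool) \<Rightarrow> conv_state \<Rightarrow> bool" where
  "conv_accept h Sink = False"
| "conv_accept h (Diag a) = h a a"
| "conv_accept h (Up a b) = h a (a + b)"
| "conv_accept h (Down a b) = h (a + b) a"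

definition conv_state_of :: "(nat \<Rightarrow> nat) \<Rightarrow> nat \<Rightarrow> nat \<Rightarrow> conv_state" where
  "conv_state_of r u v =
     (if u = v then Diag (r u) else if u < v then Up (r u) (r (v - u)) else Down (r v) (r (u - v)))"

context
  fixes r :: "nat \<Rightarrow> nat"
  assumes r_0: "r 0 = 0" and r_Suc: "\<And>x. r (Suc (r x)) = r (Suc x)"
begin

lemma foldl_conv_step_conv: "foldl (conv_step r) (Diag 0) (conv u v) = conv_state_of r u v"
proof -
  have diag: "foldl (conv_step r) (Diag (r a)) (replicate m (True, True)) = Diag (r (a + m))" for a m
    by (induction m arbitrary: a) (simp_all add: r_Suc)
  have up: "foldl (conv_step r) (Up a (r b)) (replicate m (False, True)) = Up a (r (b + m))" for a b m
    by (induction m arbitrary: b) (simp_all add: r_Suc)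
  have down: "foldl (conv_step r) (Down a (r b)) (replicate m (True, False)) = Down a (r (b + m))"
    for a b m
    by (induction m arbitrary: b) (simp_all add: r_Suc)
  have prefix: "foldl (conv_step r) (Diag 0) (replicate (min u v) (True, True)) = Diag (r (min u v))"
    using diag[of 0] r_0 by simp
  consider "u = v" | "u < v" | "v < u" by linarith
  then show ?thesis
  proof cases
    case 2
    then obtain m where "v - u = Suc m" by (metis Suc_diff_Suc)
    with 2 prefix show ?thesis
      using up[of "r u" 1 m] by (simp add: conv_eq_replicate conv_state_of_def min_def)
  next
    case 3
    then obtain m where "u - v = Suc m" by (metis Suc_diff_Suc)
    with 3 prefix show ?thesis
      using down[of "r v" 1 m] by (simp add: conv_eq_replicate conv_state_of_def min_def)
  qed (use prefix in \<open>simp add: conv_eq_replicate conv_state_of_def\<close>)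
qed

lemma foldl_conv_step_not_Sink:
  "foldl (conv_step r) (Diag 0) w \<noteq> Sink \<Longrightarrow> \<exists>u v. w = conv u v"
proof (induction w rule: rev_induct)
  case Nil
  have "[] = conv 0 0" by (simp add: conv_def)
  then show ?case by blast
next
  case (snoc x w)
  then have "foldl (conv_step r) (Diag 0) w \<noteq> Sink" by (cases "foldl (conv_step r) (Diag 0) w") auto
  then obtain u v where w: "w = conv u v" using snoc.IH by blast
  obtain x1 x2 where x: "x = (x1, x2)" by force
  consider "u = v" | "u < v" | "v < u" by linarith
  then show ?case
    using snoc.prems foldl_conv_step_conv[of u v] conv_snoc_diag conv_snoc_right conv_snoc_left
    unfolding w x by cases (cases x1; cases x2; force simp: conv_state_of_def)+
qed

lemma conv_language_eq_accepted:
  assumes "\<And>u v. conv_accept h (conv_state_of r u v) = h u v"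
  shows "{conv u v | u v. h u v} = {w. conv_accept h (foldl (conv_step r) (Diag 0) w)}"
proof -
  have "w \<in> {conv u v | u v. h u v} \<longleftrightarrow> conv_accept h (foldl (conv_step r) (Diag 0) w)" for w
  proof (cases "foldl (conv_step r) (Diag 0) w = Sink")
    case True
    then have "w \<noteq> conv u v" for u v
      using foldl_conv_step_conv by (auto simp: conv_state_of_def split: if_splits)
    with True show ?thesis by auto
  next
    case False
    then obtain u v where "w = conv u v" using foldl_conv_step_not_Sink by blast
    then show ?thesis using foldl_conv_step_conv assms by (simp add: conv_inject)
  qed
  then show ?thesis by blast
qed
end

definition conv_states :: "nat \<Rightarrow> conv_state set" where
  "conv_states N = insert Sink (Diag ` {..<N} \<union> case_prod Up ` ({..<N} \<times> {..<N})
     \<union> case_prod Down ` ({..<N} \<times> {..<N}))"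

lemma finite_conv_states: "finite (conv_states N)"
  by (simp add: conv_states_def)

lemma conv_step_conv_states:
  assumes "\<And>x. r x < N" "q \<in> conv_states N" shows "conv_step r q x \<in> conv_states N"
proof -
  obtain x1 x2 where "x = (x1, x2)" by force
  then show ?thesis using assms by (cases q; cases x1; cases x2) (auto simp: conv_states_def)
qed

lemma conv_accept_conv_state_of:
  assumes per: "ultimately_periodic T P h"
  shows "conv_accept h (conv_state_of (period_reduce T P) u v) = h u v"
proof -
  consider "u = v" | "u < v" | "v < u" by linarith
  then show ?thesis
  proof cases
    case 1 then show ?thesis
      using ultimately_periodic_reduce[OF per, of u 0] by (simp add: conv_state_of_def)
  next
    case 2 then show ?thesis
      using ultimately_periodic_reduce[OF per, of u "v - u"] by (simp add: conv_state_of_def)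
  next
    case 3 then show ?thesis
      using ultimately_periodic_reduce[OF ultimately_periodic_swap[OF per], of v "u - v"]
      by (simp add: conv_state_of_def)
  qed
qed

lemma ultimately_periodic_imp_regular:
  assumes per: "ultimately_periodic T P h"
  shows "regular {conv u v | u v. h u v}"
proof -
  have "0 < P" using per by (simp add: ultimately_periodic_def)
  define r where "r = period_reduce T P"
  have r_0: "r 0 = 0" and r_Suc: "r (Suc (r x)) = r (Suc x)" and r_less: "r x < T + P" for x
    using period_reduce_less[OF \<open>0 < P\<close>] by (simp_all add: r_def period_reduce_Suc)
  have "Diag 0 \<in> conv_states (T + P)" using r_less[of 0] r_0 by (simp add: conv_states_def)
  then have "regular {w. conv_accept h (foldl (conv_step r) (Diag 0) w)}"
    using finite_conv_states conv_step_conv_states[OF r_less]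
    by (intro regular_if_finite_automaton)
  moreover have "{conv u v | u v. h u v} = {w. conv_accept h (foldl (conv_step r) (Diag 0) w)}"
    using conv_accept_conv_state_of[OF per] unfolding r_def[symmetric]
    by (rule conv_language_eq_accepted[OF r_0 r_Suc])
  ultimately show ?thesis by simp
qed

section \<open>Propagations are unary FA-presentable\<close>

lemma unary_FA_presentable_if_encoding:
  fixes dec :: "nat \<Rightarrow> 'b" and S :: "('b \<times> 'b) set"
  assumes "regular_unary L" and dec: "bij_betw dec L C" and "rel_isomorphic X R C S"
    and per_eq: "ultimately_periodic T P (\<lambda>u v. u \<in> L \<and> v \<in> L \<and> u = v)"
    and per_rel: "ultimately_periodic T' P' (\<lambda>u v. u \<in> L \<and> v \<in> L \<and> (dec u, dec v) \<in> S)"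
  shows "unary_FA_presentable X R"
proof -
  obtain f where f: "bij_betw f X C" and f_rel: "\<forall>x\<in>X. \<forall>y\<in>X. (x, y) \<in> R \<longleftrightarrow> (f x, f y) \<in> S"
    using assms(3) unfolding rel_isomorphic_def by blast
  define \<phi> where "\<phi> = inv_into X f \<circ> dec"
  have \<phi>: "bij_betw \<phi> L X"
    unfolding \<phi>_def using dec bij_betw_inv_into[OF f] by (rule bij_betw_trans)
  have f_\<phi>: "f (\<phi> u) = dec u" if "u \<in> L" for u
    using f bij_betw_apply[OF dec that] by (simp add: \<phi>_def bij_betw_inv_into_right)
  have "{conv u v | u v. u \<in> L \<and> v \<in> L \<and> \<phi> u = \<phi> v} = {conv u v | u v. u \<in> L \<and> v \<in> L \<and> u = v}"
    using \<phi> by (auto simp: bij_betw_def inj_on_def)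
  moreover have "u \<in> L \<and> v \<in> L \<and> (\<phi> u, \<phi> v) \<in> R \<longleftrightarrow> u \<in> L \<and> v \<in> L \<and> (dec u, dec v) \<in> S"
    for u v
    using f_rel f_\<phi> bij_betw_apply[OF \<phi>] by auto
  ultimately show ?thesis
    unfolding unary_FA_presentable_def
    using \<open>regular_unary L\<close> bij_betw_imp_surj_on[OF \<phi>]
      ultimately_periodic_imp_regular[OF per_eq] ultimately_periodic_imp_regular[OF per_rel]
    by (intro exI[of _ L] exI[of _ \<phi>]) simp
qed

lemma unary_word_image: "unary_word ` A = {w. length w \<in> A}"
proof -
  have "w = unary_word (length w)" for w
    by (simp add: unary_word_def replicate_length_same)
  then show ?thesis by (auto simp: unary_word_def)
qed

lemma regular_unary_less_or: "regular_unary {u. u < M \<or> b}"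
proof -
  define step where "step q (x::unit) = min (Suc q) M" for q x
  have "foldl step q w = min (q + length w) M" if "q \<le> M" for q w
    using that by (induction w arbitrary: q) (auto simp: step_def min_def)
  then have "unary_word ` {u. u < M \<or> b} = {w. (\<lambda>q. q < M \<or> b) (foldl step 0 w)}"
    by (auto simp: unary_word_image min_def)
  moreover have "regular {w. (\<lambda>q. q < M \<or> b) (foldl step 0 w)}"
    by (rule regular_if_finite_automaton[of "{..M}"]) (auto simp: step_def)
  ultimately show ?thesis by (simp add: regular_unary_def)
qed

lemma prop_rel_converse: "prop_rel Q (\<rho>\<inverse>) n p = (prop_rel Q \<rho> n p)\<inverse>"
proof -
  have "(a, b) \<in> prop_rel Q (\<rho>\<inverse>) n p \<longleftrightarrow> (b, a) \<in> prop_rel Q \<rho> n p" for a b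
    by (cases a; cases b) (auto simp: prop_rel_def prop_seed_rel_def)
  then show ?thesis by auto
qed

lemma prop_rel_Inl_Inl:
  "(Inl q, Inl q') \<in> prop_rel Q \<rho> n p \<longleftrightarrow>
     q \<in> Q - seed_set n p \<and> q' \<in> Q - seed_set n p \<and> (q, q') \<in> \<rho>"
  and prop_rel_Inl_Inr:
  "(Inl q, Inr (k, i)) \<in> prop_rel Q \<rho> n p \<longleftrightarrow>
     q \<in> Q - seed_set n p \<and> k < n \<and> 1 \<le> i \<and> (q, p k (if i = 1 then 1 else 2)) \<in> \<rho>"
  and prop_rel_Inr_Inl:
  "(Inr (k, i), Inl q) \<in> prop_rel Q \<rho> n p \<longleftrightarrow>
     q \<in> Q - seed_set n p \<and> k < n \<and> 1 \<le> i \<and> (p k (if i = 1 then 1 else 2), q) \<in> \<rho>"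
  and prop_rel_Inr_Inr:
  "(Inr (k, i), Inr (l, j)) \<in> prop_rel Q \<rho> n p \<longleftrightarrow>
     k < n \<and> l < n \<and> 1 \<le> i \<and> 1 \<le> j \<and> prop_seed_rel \<rho> p k i l j"
  by (auto simp: prop_rel_def)

lemma prop_rel_Inr_Suc_Suc:
  "(Inr (k, Suc i), Inr (l, Suc j)) \<in> prop_rel Q \<rho> n p \<longleftrightarrow> (Inr (k, i), Inr (l, j)) \<in> prop_rel Q \<rho> n p"
  if "1 \<le> i" "1 \<le> j"
  using that by (auto simp: prop_rel_def prop_seed_rel_def)

lemma prop_rel_Inr_far:
  "(Inr (k, i), Inr (l, Suc j)) \<in> prop_rel Q \<rho> n p \<longleftrightarrow> (Inr (k, i), Inr (l, j)) \<in> prop_rel Q \<rho> n p"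
  if "i + 2 \<le> j"
  using that by (auto simp: prop_rel_def prop_seed_rel_def)

lemma prop_rel_Inl_Inr_Suc:
  "(Inl q, Inr (k, Suc i)) \<in> prop_rel Q \<rho> n p \<longleftrightarrow> (Inl q, Inr (k, i)) \<in> prop_rel Q \<rho> n p"
  if "2 \<le> i"
  using that by (auto simp: prop_rel_def)

text \<open>Naturals below \<open>length qs\<close> encode the listed non-seed elements; the others enumerate
  the propagated seed elements \<open>Inr (k, i)\<close>, \<open>n\<close> of them per level \<open>i\<close>.  For \<open>n = 0\<close>
  the second branch is junk, which is why the encoding is restricted to
  \<open>{u. u < length qs \<or> 0 < n}\<close> below.\<close>

definition prop_decode :: "nat list \<Rightarrow> nat \<Rightarrow> nat \<Rightarrow> nat + nat \<times> nat" where
  "prop_decode qs n u = (if u < length qs then Inl (qs ! u)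
     else Inr ((u - length qs) mod n, (u - length qs) div n + 1))"

lemma prop_decode_add:
  "length qs \<le> u \<Longrightarrow> 0 < n \<Longrightarrow>
     prop_decode qs n (u + n) = Inr ((u - length qs) mod n, Suc ((u - length qs) div n + 1))"
proof -
  assume "length qs \<le> u" "0 < n"
  then obtain d where "u = length qs + d" by (metis le_Suc_ex)
  with \<open>0 < n\<close> show ?thesis by (simp add: prop_decode_def div_add_self2)
qed

lemma inj_on_prop_decode:
  assumes "distinct qs" shows "inj_on (prop_decode qs n) {u. u < length qs \<or> 0 < n}"
proof (rule inj_onI)
  let ?M = "length qs"
  fix u v assume "prop_decode qs n u = prop_decode qs n v"
  then have "u < ?M \<and> v < ?M \<and> qs ! u = qs ! v \<or>
      \<not> u < ?M \<and> \<not> v < ?M \<and> (u - ?M) mod n = (v - ?M) mod n \<and> (u - ?M) div n = (v - ?M) div n"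
    by (auto simp: prop_decode_def split: if_splits)
  then show "u = v"
  proof (elim disjE conjE)
    assume "u < ?M" "v < ?M" "qs ! u = qs ! v"
    then show "u = v" using \<open>distinct qs\<close> by (simp add: nth_eq_iff_index_eq)
  next
    assume "\<not> u < ?M" "\<not> v < ?M"
      and "(u - ?M) mod n = (v - ?M) mod n" "(u - ?M) div n = (v - ?M) div n"
    then have "u - ?M = v - ?M" by (metis div_mult_mod_eq)
    with \<open>\<not> u < ?M\<close> \<open>\<not> v < ?M\<close> show "u = v" by simp
  qed
qed

lemma prop_decode_image:
  assumes "set qs = Q - seed_set n p"
  shows "prop_decode qs n ` {u. u < length qs \<or> 0 < n} = prop_carrier Q n p"
proof (intro set_eqI iffI)
  let ?M = "length qs"
  fix c assume "c \<in> prop_decode qs n ` {u. u < ?M \<or> 0 < n}"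
  then show "c \<in> prop_carrier Q n p"
    using assms by (auto simp: prop_decode_def prop_carrier_def)
next
  let ?M = "length qs"
  fix c assume "c \<in> prop_carrier Q n p"
  then consider q where "c = Inl q" "q \<in> set qs" | k i where "c = Inr (k, i)" "k < n" "1 \<le> i"
    using assms by (auto simp: prop_carrier_def)
  then show "c \<in> prop_decode qs n ` {u. u < ?M \<or> 0 < n}"
  proof cases
    case (1 q)
    then obtain u where "u < ?M" "q = qs ! u" by (metis in_set_conv_nth)
    with 1 show ?thesis by (auto simp: prop_decode_def intro!: image_eqI[of _ _ u])
  next
    case (2 k i)
    then have "c = prop_decode qs n (?M + (k + (i - 1) * n))" by (simp add: prop_decode_def)
    moreover have "?M + (k + (i - 1) * n) \<in> {u. u < ?M \<or> 0 < n}" using 2 by simp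
    ultimately show ?thesis by (rule rev_image_eqI[rotated])
  qed
qed

lemma div_add_twice_le:
  fixes x y n :: nat
  assumes "0 < n" "x + 2 * n \<le> y" shows "x div n + 2 \<le> y div n"
proof -
  have "(x + 2 * n) div n = x div n + 2" using \<open>0 < n\<close> by simp
  with div_le_mono[OF \<open>x + 2 * n \<le> y\<close>, of n] show ?thesis by simp
qed

context
  fixes qs :: "nat list" and n :: nat
  assumes "0 < n"
begin

lemma prop_decode_shift_both:
  assumes "length qs \<le> u" "length qs \<le> v"
  shows "(prop_decode qs n (u + n), prop_decode qs n (v + n)) \<in> prop_rel Q \<rho> n p \<longleftrightarrow>
    (prop_decode qs n u, prop_decode qs n v) \<in> prop_rel Q \<rho> n p"
  using assms prop_decode_add[OF _ \<open>0 < n\<close>] by (simp add: prop_decode_def prop_rel_Inr_Suc_Suc)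

lemma prop_decode_shift_right:
  assumes "u + (length qs + 2 * n + 1) \<le> v"
  shows "(prop_decode qs n u, prop_decode qs n (v + n)) \<in> prop_rel Q \<rho> n p \<longleftrightarrow>
    (prop_decode qs n u, prop_decode qs n v) \<in> prop_rel Q \<rho> n p"
proof -
  let ?M = "length qs"
  obtain d where d: "v = ?M + d" using assms by (metis le_add1 le_Suc_ex le_trans add.commute)
  have decode_v: "prop_decode qs n v = Inr (d mod n, d div n + 1)"
    and decode_v': "prop_decode qs n (v + n) = Inr (d mod n, Suc (d div n + 1))"
    using prop_decode_add[OF _ \<open>0 < n\<close>, of qs v] by (simp_all add: prop_decode_def d)
  show ?thesis
  proof (cases "u < ?M")
    case True
    have "0 + 2 * n \<le> d" using assms d by simp
    then have "2 \<le> d div n + 1" using div_add_twice_le[OF \<open>0 < n\<close>, of 0 d] by simp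
    moreover have "prop_decode qs n u = Inl (qs ! u)" using True by (simp add: prop_decode_def)
    ultimately show ?thesis by (simp add: decode_v decode_v' prop_rel_Inl_Inr_Suc)
  next
    case False
    then obtain e where e: "u = ?M + e" by (metis le_Suc_ex not_le)
    have "e + 2 * n \<le> d" using assms d e by simp
    then have "e div n + 1 + 2 \<le> d div n + 1" using div_add_twice_le[OF \<open>0 < n\<close>, of e d] by simp
    moreover have "prop_decode qs n u = Inr (e mod n, e div n + 1)" by (simp add: prop_decode_def e)
    ultimately show ?thesis by (simp add: decode_v decode_v' prop_rel_Inr_far)
  qed
qed

end

lemma ultimately_periodic_prop_decode:
  fixes qs :: "nat list" and n :: nat
  defines "L \<equiv> {u. u < length qs \<or> 0 < n}"
  shows "ultimately_periodic (length qs + 2 * n + 1) (max n 1)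
    (\<lambda>u v. u \<in> L \<and> v \<in> L \<and> (prop_decode qs n u, prop_decode qs n v) \<in> prop_rel Q \<rho> n p)"
proof (cases "n = 0")
  case True
  then show ?thesis by (simp add: ultimately_periodic_def L_def)
next
  case False
  then have "0 < n" "max n 1 = n" "\<And>u. u \<in> L" by (auto simp: L_def)
  moreover have "(prop_decode qs n (u + n), prop_decode qs n v) \<in> prop_rel Q \<rho> n p \<longleftrightarrow>
      (prop_decode qs n u, prop_decode qs n v) \<in> prop_rel Q \<rho> n p"
    if "v + (length qs + 2 * n + 1) \<le> u" for u v
    using prop_decode_shift_right[OF \<open>0 < n\<close> that, of Q "\<rho>\<inverse>" p] by (simp add: prop_rel_converse)
  ultimately show ?thesis
    by (simp add: ultimately_periodic_def prop_decode_shift_both prop_decode_shift_right)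
qed

lemma unary_FA_presentable_if_propagation:
  assumes "finite Q" and iso: "rel_isomorphic X R (prop_carrier Q n p) (prop_rel Q \<rho> n p)"
  shows "unary_FA_presentable X R"
proof -
  define qs where "qs = sorted_list_of_set (Q - seed_set n p)"
  let ?L = "{u. u < length qs \<or> 0 < n}"
  have "distinct qs" "set qs = Q - seed_set n p" using \<open>finite Q\<close> by (simp_all add: qs_def)
  then have "bij_betw (prop_decode qs n) ?L (prop_carrier Q n p)"
    by (simp add: bij_betw_def inj_on_prop_decode prop_decode_image)
  moreover have "ultimately_periodic (Suc (length qs)) 1 (\<lambda>u v. u \<in> ?L \<and> v \<in> ?L \<and> u = v)"
    by (auto simp: ultimately_periodic_def)
  ultimately show ?thesis
    using regular_unary_less_or iso ultimately_periodic_prop_decode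
    by (blast intro: unary_FA_presentable_if_encoding)
qed

section \<open>Ultimately periodic presentations yield foundational partial orders\<close>

lemma rel_isomorphic_if_bij_betw:
  assumes "bij_betw g C X" "\<And>a b. a \<in> C \<Longrightarrow> b \<in> C \<Longrightarrow> (a, b) \<in> S \<longleftrightarrow> (g a, g b) \<in> R"
  shows "rel_isomorphic X R C S"
  unfolding rel_isomorphic_def
proof (intro exI conjI ballI)
  show "bij_betw (inv_into C g) X C" using assms(1) by (rule bij_betw_inv_into)
  show "(x, y) \<in> R \<longleftrightarrow> (inv_into C g x, inv_into C g y) \<in> S" if "x \<in> X" "y \<in> X" for x y
    using assms that by (simp add: bij_betw_inv_into_right bij_betw_inv_into_left
        bij_betw_apply[OF bij_betw_inv_into])
qed

locale periodic_presentation =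
  fixes X :: "'a set" and R :: "('a \<times> 'a) set" and L :: "nat set" and \<phi> :: "nat \<Rightarrow> 'a"
    and T P :: nat
  assumes image_L: "\<phi> ` L = X"
    and periodic_eq: "ultimately_periodic T P (\<lambda>u v. u \<in> L \<and> v \<in> L \<and> \<phi> u = \<phi> v)"
    and periodic_rel: "ultimately_periodic T P (\<lambda>u v. u \<in> L \<and> v \<in> L \<and> (\<phi> u, \<phi> v) \<in> R)"
    and T_le_P: "T \<le> P"
begin

definition eqv :: "nat \<Rightarrow> nat \<Rightarrow> bool" where
  "eqv u v \<longleftrightarrow> u \<in> L \<and> v \<in> L \<and> \<phi> u = \<phi> v"

definition rel :: "nat \<Rightarrow> nat \<Rightarrow> bool" where
  "rel u v \<longleftrightarrow> u \<in> L \<and> v \<in> L \<and> (\<phi> u, \<phi> v) \<in> R"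

definition track :: "nat \<Rightarrow> nat \<Rightarrow> nat" where
  "track r i = T + r + i * P"

lemma eqv_periodic: "ultimately_periodic T P eqv"
  using periodic_eq by (simp add: eqv_def[abs_def])

lemma rel_periodic: "ultimately_periodic T P rel"
  using periodic_rel by (simp add: rel_def[abs_def])

lemma P_pos: "0 < P"
  using periodic_eq by (simp add: ultimately_periodic_def)

lemma eqv_refl: "u \<in> L \<Longrightarrow> eqv u u"
  and eqv_sym: "eqv u v \<Longrightarrow> eqv v u"
  and eqv_trans: "eqv u v \<Longrightarrow> eqv v w \<Longrightarrow> eqv u w"
  and eqv_in_L: "eqv u v \<Longrightarrow> u \<in> L \<and> v \<in> L"
  by (auto simp: eqv_def)

lemma track_add: "track r (i + k) = track r i + k * P"
  by (simp add: track_def algebra_simps)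

lemma T_le_track: "T \<le> track r i"
  by (simp add: track_def)

lemma track_far: "r < P \<Longrightarrow> i + 2 \<le> j \<Longrightarrow> track r i + T \<le> track r' j"
  using mult_le_mono1[of "i + 2" j P] T_le_P by (simp add: track_def algebra_simps)

lemma track_far_same: "i < j \<Longrightarrow> track r i + T \<le> track r j"
  using mult_le_mono1[of "Suc i" j P] T_le_P by (simp add: track_def algebra_simps)

lemma track_decomp: "T \<le> u \<Longrightarrow> u = track ((u - T) mod P) ((u - T) div P)"
  by (simp add: track_def)

context
  fixes h :: "nat \<Rightarrow> nat \<Rightarrow> bool"
  assumes h: "ultimately_periodic T P h"
begin

lemma track_shift_down:
  assumes "m \<le> i" "m \<le> j"
  shows "h (track r i) (track r' j) = h (track r (i - m)) (track r' (j - m))"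
  using ultimately_periodic_shift_both[OF h T_le_track[of r "i - m"] T_le_track[of r' "j - m"], of m]
    track_add[of r "i - m" m] track_add[of r' "j - m" m] assms
  by simp

lemma track_stable_right:
  assumes "track r i + T \<le> track r' j" "j \<le> j'"
  shows "h (track r i) (track r' j') = h (track r i) (track r' j)"
  using ultimately_periodic_shift_right[OF h assms(1), of "j' - j"] track_add[of r' j "j' - j"] assms(2)
  by simp

lemma track_stable_left:
  assumes "track r' j + T \<le> track r i" "i \<le> i'"
  shows "h (track r i') (track r' j) = h (track r i) (track r' j)"
  using ultimately_periodic_shift_left[OF h assms(1), of "i' - i"] track_add[of r i "i' - i"] assms(2)
  by simp

lemma track_same_level: "h (track r a) (track r' a) = h (track r 0) (track r' 0)"
  using track_shift_down[of a a a] by simp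

lemma track_next_level: "h (track r a) (track r' (Suc a)) = h (track r 0) (track r' 1)"
  using track_shift_down[of a a "Suc a"] by simp

lemma track_prev_level: "h (track r (Suc b)) (track r' b) = h (track r 1) (track r' 0)"
  using track_shift_down[of b "Suc b" b] by simp

lemma track_higher_level:
  assumes "r < P" "a + 2 \<le> b"
  shows "h (track r a) (track r' b) = h (track r 0) (track r' 2)"
  using track_shift_down[of a a b] track_stable_right[OF track_far[OF \<open>r < P\<close>, of 0 2], of "b - a"]
    assms(2)
  by simp

lemma track_lower_level:
  assumes "r' < P" "b + 2 \<le> a"
  shows "h (track r a) (track r' b) = h (track r 2) (track r' 0)"
  using track_shift_down[of b a b] track_stable_left[OF track_far[OF \<open>r' < P\<close>, of 0 2], of "a - b"]
    assms(2)
  by simp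

lemma track_forward: "a < b \<Longrightarrow> h (track r a) (track r b) = h (track r 0) (track r 1)"
  using track_shift_down[of a a b] track_stable_right[OF track_far_same[of 0 1], of "b - a"]
  by simp

lemma track_backward: "a < b \<Longrightarrow> h (track r b) (track r a) = h (track r 1) (track r 0)"
  using track_shift_down[of a b a] track_stable_left[OF track_far_same[of 0 1], of "b - a"]
  by simp

end

lemmas eqv_track_forward = track_forward[OF eqv_periodic]

lemma track_in_L_iff: "track r i \<in> L \<longleftrightarrow> track r 0 \<in> L"
  using track_same_level[OF eqv_periodic, of r i r] by (simp add: eqv_def)

lemma eqv_track_shift_up: "eqv (track r a) (track r' b) \<Longrightarrow> eqv (track r (a + k)) (track r' (b + k))"
  using track_shift_down[OF eqv_periodic, of k "a + k" "b + k" r r'] by simp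

definition proper_track :: "nat \<Rightarrow> bool" where
  "proper_track r \<longleftrightarrow> r < P \<and> track r 0 \<in> L \<and> \<not> eqv (track r 0) (track r 1)"

lemma proper_track_in_L: "proper_track r \<Longrightarrow> track r i \<in> L"
  using track_in_L_iff[of r i] by (auto simp: proper_track_def)

lemma proper_track_distinct:
  assumes "proper_track r" "i \<noteq> j" shows "\<not> eqv (track r i) (track r j)"
proof -
  have "\<not> eqv (track r a) (track r b)" if "a < b" for a b
    using that assms(1) eqv_track_forward[of a b r] by (simp add: proper_track_def)
  with assms(2) show ?thesis by (metis eqv_sym linorder_neq_iff)
qed

lemma proper_tracks_far_distinct:
  assumes "proper_track r" "proper_track r'" "i + 2 \<le> j"
  shows "\<not> eqv (track r i) (track r' j)" and "\<not> eqv (track r' j) (track r i)"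
proof -
  have "r < P" using assms(1) by (simp add: proper_track_def)
  show "\<not> eqv (track r i) (track r' j)"
  proof
    assume e: "eqv (track r i) (track r' j)"
    then have "eqv (track r i) (track r' (Suc j))"
      using track_stable_right[OF eqv_periodic track_far[OF \<open>r < P\<close> assms(3)], of "Suc j"] by simp
    with e have "eqv (track r' j) (track r' (Suc j))" by (blast intro: eqv_sym eqv_trans)
    with proper_track_distinct[OF assms(2), of j "Suc j"] show False by simp
  qed
  then show "\<not> eqv (track r' j) (track r i)" by (blast intro: eqv_sym)
qed

lemma improper_track_constant:
  assumes "r < P" "track r 0 \<in> L" "\<not> proper_track r"
  shows "eqv (track r i) (track r 0)"
proof (cases "i = 0")
  case True then show ?thesis using assms(2) by (simp add: eqv_refl)
next
  case False
  then have "eqv (track r 0) (track r i)"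
    using assms eqv_track_forward[of 0 i r] by (simp add: proper_track_def)
  then show ?thesis by (rule eqv_sym)
qed

text \<open>Every proper track is, up to \<open>eqv\<close>, either a unique representative track or that
  track shifted by one level; longer shifts are excluded by \<open>proper_tracks_far_distinct\<close>.\<close>

definition starts_like :: "nat \<Rightarrow> nat \<Rightarrow> bool" where
  "starts_like r' r \<longleftrightarrow> proper_track r' \<and> eqv (track r' 0) (track r 0)"

definition starts_one_below :: "nat \<Rightarrow> nat \<Rightarrow> bool" where
  "starts_one_below r' r \<longleftrightarrow> proper_track r' \<and> eqv (track r' 0) (track r 1)"

definition representative :: "nat \<Rightarrow> bool" where
  "representative r \<longleftrightarrow> proper_track r \<and> (\<forall>r'. \<not> starts_one_below r' r) \<and> (\<forall>r'<r. \<not> starts_like r' r)"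

lemma representative_eqv:
  assumes "representative r" "representative r'" "eqv (track r i) (track r' j)"
  shows "r = r' \<and> i = j"
proof -
  have proper: "proper_track r" "proper_track r'"
    using assms(1,2) by (simp_all add: representative_def)
  consider "i = j" | "j = Suc i" | "i = Suc j" | "i + 2 \<le> j" | "j + 2 \<le> i" by linarith
  then show ?thesis
  proof cases
    case 1
    then have "eqv (track r 0) (track r' 0)" "eqv (track r' 0) (track r 0)"
      using assms(3) track_same_level[OF eqv_periodic, of r i r'] by (auto intro: eqv_sym)
    then have "\<not> r < r'" "\<not> r' < r"
      using assms(1,2) proper unfolding representative_def starts_like_def by blast+
    with 1 show ?thesis by simp
  next
    case 2
    then have "starts_one_below r r'"
      using assms(3) proper track_next_level[OF eqv_periodic, of r i r'] by (simp add: starts_one_below_def)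
    with assms(2) show ?thesis by (simp add: representative_def)
  next
    case 3
    then have "starts_one_below r' r"
      using assms(3) proper track_prev_level[OF eqv_periodic, of r j r']
      by (simp add: starts_one_below_def eqv_sym)
    with assms(1) show ?thesis by (simp add: representative_def)
  qed (use assms(3) proper_tracks_far_distinct[OF proper] proper_tracks_far_distinct[OF proper(2,1)]
        in blast)+
qed

lemma representative_Least_starts_one_below:
  assumes "proper_track r" "starts_one_below r1 r"
  defines "r0 \<equiv> LEAST r'. starts_one_below r' r"
  shows "representative r0" and "eqv (track r (Suc i)) (track r0 i)"
proof -
  have "starts_one_below r0 r" unfolding r0_def using assms(2) by (rule LeastI)
  then have proper: "proper_track r0" and start: "eqv (track r0 0) (track r 1)"
    by (auto simp: starts_one_below_def)
  show "eqv (track r (Suc i)) (track r0 i)"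
    using eqv_track_shift_up[OF start, of i] by (simp add: eqv_sym)
  have "\<not> starts_one_below r' r0" for r'
  proof
    assume "starts_one_below r' r0"
    then have "proper_track r'" "eqv (track r' 0) (track r0 1)" by (auto simp: starts_one_below_def)
    moreover have "eqv (track r0 1) (track r 2)"
      using eqv_track_shift_up[OF start, of 1] by (simp add: numeral_2_eq_2)
    ultimately have "eqv (track r' 0) (track r 2)" by (blast intro: eqv_trans)
    with proper_tracks_far_distinct(1)[OF \<open>proper_track r'\<close> assms(1), of 0 2] show False by simp
  qed
  moreover have "\<not> starts_like r' r0" if "r' < r0" for r'
  proof
    assume "starts_like r' r0"
    then have "starts_one_below r' r"
      using start by (auto simp: starts_like_def starts_one_below_def intro: eqv_trans)
    with \<open>r' < r0\<close> not_less_Least[of r' "\<lambda>r'. starts_one_below r' r"] show False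
      unfolding r0_def by blast
  qed
  ultimately show "representative r0" using proper by (simp add: representative_def)
qed

lemma representative_Least_starts_like:
  assumes "proper_track r" "\<forall>r'. \<not> starts_one_below r' r"
  defines "r0 \<equiv> LEAST r'. starts_like r' r"
  shows "representative r0" and "eqv (track r i) (track r0 i)"
proof -
  have "starts_like r r" using assms(1) by (simp add: starts_like_def proper_track_def eqv_refl)
  then have "starts_like r0 r" unfolding r0_def by (rule LeastI)
  then have proper: "proper_track r0" and start: "eqv (track r0 0) (track r 0)"
    by (auto simp: starts_like_def)
  show "eqv (track r i) (track r0 i)"
    using eqv_track_shift_up[OF start, of i] by (simp add: eqv_sym)
  have "\<not> starts_one_below r' r0" for r'
  proof
    assume "starts_one_below r' r0"
    moreover have "eqv (track r0 1) (track r 1)" using eqv_track_shift_up[OF start, of 1] by simp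
    ultimately have "starts_one_below r' r" by (auto simp: starts_one_below_def intro: eqv_trans)
    with assms(2) show False by blast
  qed
  moreover have "\<not> starts_like r' r0" if "r' < r0" for r'
  proof
    assume "starts_like r' r0"
    then have "starts_like r' r" using start by (auto simp: starts_like_def intro: eqv_trans)
    with \<open>r' < r0\<close> not_less_Least[of r' "\<lambda>r'. starts_like r' r"] show False
      unfolding r0_def by blast
  qed
  ultimately show "representative r0" using proper by (simp add: representative_def)
qed

lemma proper_track_represented:
  assumes "proper_track r"
  obtains r0 where "representative r0"
    "(\<forall>i. eqv (track r i) (track r0 i)) \<or> (\<forall>i. eqv (track r (Suc i)) (track r0 i))"
  using representative_Least_starts_one_below[OF assms] representative_Least_starts_like[OF assms]
  by blast

definition rep_tracks :: "nat set" where
  "rep_tracks = {r. r < P \<and> representative r}"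

definition num_seeds :: nat where
  "num_seeds = card rep_tracks"

definition seed_track :: "nat \<Rightarrow> nat" where
  "seed_track k = sorted_list_of_set rep_tracks ! k"

text \<open>Seed elements start at level 2 of their track, above every core element
  (these lie below \<open>T + 2 * P\<close>) and far enough from them for periodicity to apply.\<close>

definition seed :: "nat \<Rightarrow> nat \<Rightarrow> nat" where
  "seed k i = track (seed_track k) (Suc i)"

definition on_seed :: "nat \<Rightarrow> bool" where
  "on_seed u \<longleftrightarrow> (\<exists>k<num_seeds. \<exists>i\<ge>1. eqv u (seed k i))"

definition core_candidates :: "nat set" where
  "core_candidates = {u \<in> L. u < T + 2 * P \<and> \<not> on_seed u}"

definition core :: "nat set" where
  "core = {u \<in> core_candidates. \<forall>u'\<in>core_candidates. u' < u \<longrightarrow> \<not> eqv u' u}"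

definition found_Q :: "nat set" where
  "found_Q = core \<union> seed_set num_seeds seed"

definition found_rho :: "(nat \<times> nat) set" where
  "found_rho = {(u, v). u \<in> found_Q \<and> v \<in> found_Q \<and> (\<phi> u, \<phi> v) \<in> R}"

lemma seed_track_bij: "bij_betw seed_track {..<num_seeds} rep_tracks"
proof -
  have "finite rep_tracks" by (simp add: rep_tracks_def)
  then show ?thesis
    unfolding seed_track_def num_seeds_def
    using bij_betw_nth[of "sorted_list_of_set rep_tracks" "{..<card rep_tracks}" rep_tracks]
    by (simp add: lessThan_atLeast0)
qed

lemma seed_track_representative: "k < num_seeds \<Longrightarrow> representative (seed_track k)"
  and seed_track_less: "k < num_seeds \<Longrightarrow> seed_track k < P"
  using bij_betw_apply[OF seed_track_bij, of k] by (auto simp: rep_tracks_def)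

lemma seed_track_proper: "k < num_seeds \<Longrightarrow> proper_track (seed_track k)"
  using seed_track_representative by (simp add: representative_def)

lemma seed_in_L: "k < num_seeds \<Longrightarrow> seed k i \<in> L"
  using proper_track_in_L seed_track_proper by (simp add: seed_def)

lemma seed_ge:
  assumes "1 \<le> i" shows "T + 2 * P \<le> seed k i"
proof -
  have "1 * P \<le> i * P" using assms by (rule mult_le_mono1)
  then show ?thesis unfolding seed_def track_def mult_Suc by linarith
qed

lemma eqv_seed_iff:
  assumes "k < num_seeds" "l < num_seeds" "eqv (seed k i) (seed l j)"
  shows "k = l \<and> i = j"
  using representative_eqv[OF seed_track_representative seed_track_representative, OF assms(1,2)]
    bij_betw_imp_inj_on[OF seed_track_bij] assms(1,2,3)
  by (auto simp: seed_def inj_on_def)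

lemma seed_inj: "k < num_seeds \<Longrightarrow> l < num_seeds \<Longrightarrow> seed k i = seed l j \<Longrightarrow> k = l \<and> i = j"
  using eqv_seed_iff eqv_refl seed_in_L by metis

lemma seed_set_eq: "seed_set num_seeds seed = {seed k i | k i. k < num_seeds \<and> 1 \<le> i \<and> i \<le> 5}"
  by (auto simp: seed_set_def) blast

lemma finite_core: "finite core"
  by (rule finite_subset[of _ "{..<T + 2 * P}"]) (auto simp: core_def core_candidates_def)

lemma core_in_L: "q \<in> core \<Longrightarrow> q \<in> L \<and> q < T + 2 * P \<and> \<not> on_seed q"
  by (auto simp: core_def core_candidates_def)

lemma core_seed_disjoint: "core \<inter> seed_set num_seeds seed = {}"
proof -
  have "seed k i \<notin> core" if "1 \<le> i" for k i
    using seed_ge[OF that, of k] core_in_L by fastforce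
  then show ?thesis by (auto simp: seed_set_eq)
qed

lemma found_Q_minus_seeds: "found_Q - seed_set num_seeds seed = core"
  using core_seed_disjoint by (auto simp: found_Q_def)

lemma finite_found_Q: "finite found_Q"
  using finite_core by (simp add: found_Q_def seed_set_def)

lemma found_Q_in_L: "u \<in> found_Q \<Longrightarrow> u \<in> L"
  using core_in_L seed_in_L by (auto simp: found_Q_def seed_set_eq)

lemma core_eqv: "q \<in> core \<Longrightarrow> q' \<in> core \<Longrightarrow> eqv q q' \<Longrightarrow> q = q'"
  by (metis (no_types, lifting) core_def eqv_sym linorder_neq_iff mem_Collect_eq)

lemma core_not_eqv_seed: "q \<in> core \<Longrightarrow> k < num_seeds \<Longrightarrow> 1 \<le> i \<Longrightarrow> \<not> eqv q (seed k i)"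
  using core_in_L by (auto simp: on_seed_def)

lemma found_Q_eqv: assumes "u \<in> found_Q" "v \<in> found_Q" "eqv u v" shows "u = v"
  using assms core_eqv core_not_eqv_seed eqv_seed_iff eqv_sym
  by (auto simp: found_Q_def seed_set_eq) blast+

lemma eqv_high_representative_on_seed:
  assumes "representative r" "r < P" "2 \<le> i" "eqv u (track r i)"
  shows "on_seed u"
proof -
  have "r \<in> seed_track ` {..<num_seeds}"
    using assms(1,2) bij_betw_imp_surj_on[OF seed_track_bij] by (simp add: rep_tracks_def)
  then obtain k where "k < num_seeds" "seed_track k = r" by auto
  with assms(3,4) have "eqv u (seed k (i - 1))" by (simp add: seed_def)
  moreover have "1 \<le> i - 1" using assms(3) by simp
  ultimately show ?thesis using \<open>k < num_seeds\<close> unfolding on_seed_def by blast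
qed

lemma high_track_decomp:
  assumes "T + 2 * P \<le> u"
  obtains r j where "r < P" "2 \<le> j" "u = track r j"
proof -
  define r where "r = (u - T) mod P"
  define j where "j = (u - T) div P"
  have u: "u = track r j" and "r < P"
    using track_decomp[of u] assms P_pos by (simp_all add: r_def j_def)
  have "2 \<le> j"
  proof (rule ccontr)
    assume "\<not> 2 \<le> j"
    then have "j * P \<le> 1 * P" by (intro mult_le_mono1) simp
    with assms u \<open>r < P\<close> show False unfolding track_def by linarith
  qed
  with u \<open>r < P\<close> show ?thesis using that by blast
qed

lemma low_track: "r < P \<Longrightarrow> i \<le> 1 \<Longrightarrow> track r i < T + 2 * P"
  using mult_le_mono1[of i 1 P] unfolding track_def by linarith

lemma proper_track_low_or_on_seed:
  assumes "proper_track r" "2 \<le> j" "\<not> on_seed (track r j)"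
  obtains r0 where "r0 < P" "eqv (track r j) (track r0 1)"
proof -
  obtain r0 where rep: "representative r0"
    and cover: "(\<forall>i. eqv (track r i) (track r0 i)) \<or> (\<forall>i. eqv (track r (Suc i)) (track r0 i))"
    using assms(1) by (rule proper_track_represented)
  have "r0 < P" using rep by (simp add: representative_def proper_track_def)
  note on_seed = eqv_high_representative_on_seed[OF rep \<open>r0 < P\<close>]
  have no_high: "\<not> eqv (track r j) (track r0 i)" if "2 \<le> i" for i
    using on_seed[OF that] assms(3) by blast
  from cover have shifted: "eqv (track r j) (track r0 (j - 1))"
  proof
    assume "\<forall>i. eqv (track r (Suc i)) (track r0 i)"
    moreover have "Suc (j - 1) = j" using assms(2) by simp
    ultimately show ?thesis by metis
  qed (use no_high[OF assms(2)] in blast)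
  then have "j - 1 = 1" using no_high[of "j - 1"] assms(2) by linarith
  with shifted have "eqv (track r j) (track r0 1)" by simp
  with \<open>r0 < P\<close> show ?thesis by (rule that)
qed

lemma eqv_low_or_on_seed:
  assumes "u \<in> L" "\<not> on_seed u"
  obtains u' where "u' \<in> L" "u' < T + 2 * P" "eqv u u'"
proof (cases "u < T + 2 * P")
  case True then show ?thesis using that assms(1) eqv_refl by blast
next
  case False
  then obtain r j where "r < P" "2 \<le> j" and u: "u = track r j" by (metis high_track_decomp not_le)
  then have "track r 0 \<in> L" using assms(1) track_in_L_iff by metis
  show ?thesis
  proof (cases "proper_track r")
    case False
    then show ?thesis
      using that improper_track_constant[OF \<open>r < P\<close> \<open>track r 0 \<in> L\<close>] low_track[OF \<open>r < P\<close>, of 0] u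
        \<open>track r 0 \<in> L\<close> by blast
  next
    case True
    then obtain r0 where "r0 < P" "eqv u (track r0 1)"
      using proper_track_low_or_on_seed \<open>2 \<le> j\<close> assms(2) u by metis
    then show ?thesis using that low_track[OF \<open>r0 < P\<close>, of 1] eqv_in_L by blast
  qed
qed

lemma eqv_on_seed_or_core:
  assumes "u \<in> L" shows "on_seed u \<or> (\<exists>q\<in>core. eqv u q)"
proof (cases "on_seed u")
  case False
  then obtain u' where u': "u' \<in> L" "u' < T + 2 * P" "eqv u u'"
    using eqv_low_or_on_seed[OF assms] by blast
  have "\<not> on_seed u'"
    using False u'(3) unfolding on_seed_def by (blast intro: eqv_trans)
  with u' have cand: "u' \<in> core_candidates" by (simp add: core_candidates_def)
  define q where "q = (LEAST x. x \<in> core_candidates \<and> eqv x u')"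
  have q: "q \<in> core_candidates \<and> eqv q u'"
    unfolding q_def by (rule LeastI[of _ u']) (use cand u' eqv_refl in auto)
  have "q \<in> core"
    unfolding core_def
  proof (intro CollectI conjI ballI impI notI)
    show "q \<in> core_candidates" using q by simp
  next
    fix u'' assume "u'' \<in> core_candidates" "u'' < q" "eqv u'' q"
    then show False using q not_less_Least[of u'' "\<lambda>x. x \<in> core_candidates \<and> eqv x u'"]
      unfolding q_def by (blast intro: eqv_trans)
  qed
  moreover have "eqv u q" using q u'(3) by (blast intro: eqv_sym eqv_trans)
  ultimately show ?thesis by blast
qed simp

lemma found_rho_iff: "u \<in> found_Q \<Longrightarrow> v \<in> found_Q \<Longrightarrow> (u, v) \<in> found_rho \<longleftrightarrow> rel u v"
  using found_Q_in_L by (auto simp: found_rho_def rel_def)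

lemma seed_in_found_Q: "k < num_seeds \<Longrightarrow> 1 \<le> i \<Longrightarrow> i \<le> 5 \<Longrightarrow> seed k i \<in> found_Q"
  by (auto simp: found_Q_def seed_set_eq)

lemma core_in_found_Q: "q \<in> core \<Longrightarrow> q \<in> found_Q"
  by (simp add: found_Q_def)

lemma rel_seed_eq_prop_seed_rel:
  assumes "k < num_seeds" "l < num_seeds" "1 \<le> i" "1 \<le> j"
  shows "rel (seed k i) (seed l j) \<longleftrightarrow> prop_seed_rel found_rho seed k i l j"
proof -
  let ?r = "seed_track k" and ?r' = "seed_track l"
  have "?r < P" "?r' < P" using assms(1,2) by (simp_all add: seed_track_less)
  have rho: "(seed k a, seed l b) \<in> found_rho \<longleftrightarrow> rel (seed k a) (seed l b)"
    if "1 \<le> a" "a \<le> 5" "1 \<le> b" "b \<le> 5" for a b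
    using that assms(1,2) by (simp add: found_rho_iff seed_in_found_Q)
  note rel_track_same_level = track_same_level[OF rel_periodic]
    and rel_track_next_level = track_next_level[OF rel_periodic]
    and rel_track_prev_level = track_prev_level[OF rel_periodic]
    and rel_track_higher_level = track_higher_level[OF rel_periodic]
    and rel_track_lower_level = track_lower_level[OF rel_periodic]
  consider "i = j" | "j = Suc i" | "i = Suc j" | "i + 2 \<le> j" | "j + 2 \<le> i" by linarith
  then show ?thesis
  proof cases
    case 1 then show ?thesis
      using rho[of 1 1] rel_track_same_level[of ?r "Suc i" ?r'] rel_track_same_level[of ?r 2 ?r']
      by (simp add: seed_def prop_seed_rel_def eval_nat_numeral)
  next
    case 2 then show ?thesis
      using rho[of 1 2] rel_track_next_level[of ?r "Suc i" ?r'] rel_track_next_level[of ?r 2 ?r']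
      by (simp add: seed_def prop_seed_rel_def eval_nat_numeral)
  next
    case 3 then show ?thesis
      using rho[of 2 1] rel_track_prev_level[of ?r "Suc j" ?r'] rel_track_prev_level[of ?r 2 ?r']
      by (simp add: seed_def prop_seed_rel_def eval_nat_numeral)
  next
    case 4 then show ?thesis
      using rho[of 1 3] rel_track_higher_level[OF \<open>?r < P\<close>, of "Suc i" "Suc j" ?r']
        rel_track_higher_level[OF \<open>?r < P\<close>, of 2 4 ?r']
      by (simp add: seed_def prop_seed_rel_def eval_nat_numeral)
  next
    case 5 then show ?thesis
      using rho[of 3 1] rel_track_lower_level[OF \<open>?r' < P\<close>, of "Suc j" "Suc i" ?r]
        rel_track_lower_level[OF \<open>?r' < P\<close>, of 2 4 ?r]
      by (simp add: seed_def prop_seed_rel_def eval_nat_numeral)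
  qed
qed

lemma rel_core_seed:
  assumes "q \<in> core" "2 \<le> i"
  shows "rel q (seed k i) = rel q (seed k 2)" and "rel (seed k i) q = rel (seed k 2) q"
proof -
  have far: "q + T \<le> track (seed_track k) 3"
    using core_in_L[OF assms(1)] T_le_P by (simp add: track_def)
  have "Suc i = 3 + (i - 2)" using assms(2) by simp
  then have "seed k i = track (seed_track k) 3 + (i - 2) * P"
    by (metis seed_def track_add)
  moreover have "seed k 2 = track (seed_track k) 3" by (simp add: seed_def numeral_3_eq_3)
  ultimately show "rel q (seed k i) = rel q (seed k 2)" "rel (seed k i) q = rel (seed k 2) q"
    using ultimately_periodic_shift_right[OF rel_periodic far, of "i - 2"]
      ultimately_periodic_shift_left[OF rel_periodic far, of "i - 2"] by simp_all
qed

lemma found_unary_FA_foundational: "unary_FA_foundational found_Q found_rho num_seeds seed"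
  unfolding unary_FA_foundational_def
proof (intro conjI allI impI ballI)
  show "finite found_Q" by (rule finite_found_Q)
  show "found_rho \<subseteq> found_Q \<times> found_Q" by (auto simp: found_rho_def)
  show "seed_set num_seeds seed \<subseteq> found_Q" by (auto simp: found_Q_def)
  show "inj_on (\<lambda>(k, i). seed k i) ({..<num_seeds} \<times> {1..5})"
    by (rule inj_onI) (auto dest: seed_inj)
next
  fix k l assume "k < num_seeds" "l < num_seeds"
  then have rho: "(seed k i, seed l j) \<in> found_rho \<longleftrightarrow> prop_seed_rel found_rho seed k i l j"
    if "i \<in> {1..5}" "j \<in> {1..5}" for i j
    using that by (simp add: found_rho_iff seed_in_found_Q rel_seed_eq_prop_seed_rel)
  show "((seed k i, seed l i) \<in> found_rho) = ((seed k j, seed l j) \<in> found_rho)"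
    if "i \<in> {1..5}" "j \<in> {1..5}" for i j
    using that rho[of i i] rho[of j j] by (simp add: prop_seed_rel_def)
  show "((seed k i, seed l (i + 1)) \<in> found_rho) = ((seed k j, seed l (j + 1)) \<in> found_rho)"
    if "i \<in> {1..4}" "j \<in> {1..4}" for i j
    using that rho[of i "i + 1"] rho[of j "j + 1"] by (simp add: prop_seed_rel_def)
  show "((seed k (i + 1), seed l i) \<in> found_rho) = ((seed k (j + 1), seed l j) \<in> found_rho)"
    if "i \<in> {1..4}" "j \<in> {1..4}" for i j
    using that rho[of "i + 1" i] rho[of "j + 1" j] by (simp add: prop_seed_rel_def)
  show "((seed k i, seed l j) \<in> found_rho) = ((seed k i', seed l j') \<in> found_rho)"
    if "1 \<le> i \<and> i + 2 \<le> j \<and> j \<le> 5 \<and> 1 \<le> i' \<and> i' + 2 \<le> j' \<and> j' \<le> 5" for i j i' j'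
    using that rho[of i j] rho[of i' j'] by (simp add: prop_seed_rel_def)
  show "((seed k j, seed l i) \<in> found_rho) = ((seed k j', seed l i') \<in> found_rho)"
    if "1 \<le> i \<and> i + 2 \<le> j \<and> j \<le> 5 \<and> 1 \<le> i' \<and> i' + 2 \<le> j' \<and> j' \<le> 5" for i j i' j'
    using that rho[of j i] rho[of j' i'] by (simp add: prop_seed_rel_def)
next
  fix k q assume k: "k < num_seeds" and "q \<in> found_Q - seed_set num_seeds seed"
  then have "q \<in> core" by (simp add: found_Q_minus_seeds)
  then have "(q, seed k i) \<in> found_rho \<longleftrightarrow> rel q (seed k 2)"
    and "(seed k i, q) \<in> found_rho \<longleftrightarrow> rel (seed k 2) q" if "i \<in> {2..5}" for i
    using that k rel_core_seed[of q i k]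
    by (simp_all add: found_rho_iff core_in_found_Q seed_in_found_Q)
  then show "((q, seed k i) \<in> found_rho) = ((q, seed k j) \<in> found_rho)"
    and "((seed k i, q) \<in> found_rho) = ((seed k j, q) \<in> found_rho)"
    if "i \<in> {2..5}" "j \<in> {2..5}" for i j
    using that by simp_all
qed

lemma found_partial_order:
  assumes "partial_order_on X R" shows "partial_order_on found_Q found_rho"
proof -
  have R: "refl_on X R" "trans R" "antisym R"
    using assms by (auto simp: partial_order_on_def preorder_on_def)
  have \<phi>: "\<phi> u \<in> X" if "u \<in> found_Q" for u using found_Q_in_L[OF that] image_L by blast
  have "refl_on found_Q found_rho" using R(1) \<phi> by (auto simp: refl_on_def found_rho_def)
  moreover have "trans found_rho" using R(2) unfolding trans_def found_rho_def by blast
  moreover have "antisym found_rho"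
  proof (rule antisymI)
    fix u v assume "(u, v) \<in> found_rho" "(v, u) \<in> found_rho"
    then have "u \<in> found_Q" "v \<in> found_Q" "\<phi> u = \<phi> v"
      using R(3) by (auto simp: found_rho_def dest: antisymD)
    then show "u = v" using found_Q_eqv found_Q_in_L by (simp add: eqv_def)
  qed
  moreover have "found_rho \<subseteq> found_Q \<times> found_Q" by (auto simp: found_rho_def)
  ultimately show ?thesis by (simp add: partial_order_on_def preorder_on_def)
qed

lemma found_rho_same_seed:
  assumes "k < num_seeds" "i \<in> {1..5}" "j \<in> {1..5}"
  shows "(seed k i, seed k j) \<in> found_rho \<longleftrightarrow>
    rel (track (seed_track k) (Suc i)) (track (seed_track k) (Suc j))"
  using assms by (simp add: found_rho_iff seed_in_found_Q) (simp add: seed_def)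

lemma seed_ascending_if:
  assumes k: "k < num_seeds" and "rel (track (seed_track k) 0) (track (seed_track k) 1)"
  shows "seed_ascending found_rho seed k"
  unfolding seed_ascending_def
proof (intro ballI conjI)
  fix i :: nat assume "i \<in> {1..4}"
  then show "(seed k i, seed k (i + 1)) \<in> found_rho"
    using assms found_rho_same_seed[OF k, of i "i + 1"]
      track_forward[OF rel_periodic, of "Suc i" "Suc (i + 1)"] by simp
  show "seed k i \<noteq> seed k (i + 1)" using seed_inj[OF k k] by fastforce
qed

lemma seed_descending_if:
  assumes k: "k < num_seeds" and "rel (track (seed_track k) 1) (track (seed_track k) 0)"
  shows "seed_descending found_rho seed k"
  unfolding seed_descending_def
proof (intro ballI conjI)
  fix i :: nat assume "i \<in> {1..4}"
  then show "(seed k (i + 1), seed k i) \<in> found_rho"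
    using assms found_rho_same_seed[OF k, of "i + 1" i]
      track_backward[OF rel_periodic, of "Suc i" "Suc (i + 1)"] by simp
  show "seed k i \<noteq> seed k (i + 1)" using seed_inj[OF k k] by fastforce
qed

lemma seed_antichain_if:
  assumes k: "k < num_seeds"
    and "\<not> rel (track (seed_track k) 0) (track (seed_track k) 1)"
    and "\<not> rel (track (seed_track k) 1) (track (seed_track k) 0)"
  shows "seed_antichain found_rho seed k"
  unfolding seed_antichain_def
proof (intro ballI impI)
  fix i j :: nat assume ij: "i \<in> {1..5}" "j \<in> {1..5}" "seed k i \<noteq> seed k j"
  then consider "i < j" | "j < i" by (metis linorder_neq_iff)
  then show "(seed k i, seed k j) \<notin> found_rho"
  proof cases
    case 1 then show ?thesis
      using assms ij found_rho_same_seed[OF k, of i j]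
        track_forward[OF rel_periodic, of "Suc i" "Suc j"] by simp
  next
    case 2 then show ?thesis
      using assms ij found_rho_same_seed[OF k, of i j]
        track_backward[OF rel_periodic, of "Suc j" "Suc i"] by simp
  qed
qed

lemma seed_shape:
  assumes "k < num_seeds"
  shows "seed_antichain found_rho seed k \<or> seed_ascending found_rho seed k \<or> seed_descending found_rho seed k"
  using seed_antichain_if[OF assms] seed_ascending_if[OF assms] seed_descending_if[OF assms] by blast

definition embed :: "nat + nat \<times> nat \<Rightarrow> nat" where
  "embed a = (case a of Inl q \<Rightarrow> q | Inr (k, i) \<Rightarrow> seed k i)"

lemma found_carrier: "prop_carrier found_Q num_seeds seed = Inl ` core \<union> Inr ` {(k, i). k < num_seeds \<and> 1 \<le> i}"
  by (simp add: prop_carrier_def found_Q_minus_seeds)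

lemma embed_in_L: "a \<in> prop_carrier found_Q num_seeds seed \<Longrightarrow> embed a \<in> L"
  using core_in_L seed_in_L by (auto simp: found_carrier embed_def)

lemma embed_eqv:
  assumes "a \<in> prop_carrier found_Q num_seeds seed" "b \<in> prop_carrier found_Q num_seeds seed"
    "eqv (embed a) (embed b)"
  shows "a = b"
  using assms core_eqv core_not_eqv_seed eqv_seed_iff eqv_sym
  by (auto simp: found_carrier embed_def) blast+

lemma eqv_embed:
  assumes "u \<in> L" obtains a where "a \<in> prop_carrier found_Q num_seeds seed" "eqv u (embed a)"
proof -
  from eqv_on_seed_or_core[OF assms] show ?thesis
  proof
    assume "on_seed u"
    then obtain k i where "k < num_seeds" "1 \<le> i" "eqv u (seed k i)" by (auto simp: on_seed_def)
    then show ?thesis by (intro that[of "Inr (k, i)"]) (auto simp: found_carrier embed_def)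
  next
    assume "\<exists>q\<in>core. eqv u q"
    then obtain q where "q \<in> core" "eqv u q" by blast
    then show ?thesis by (intro that[of "Inl q"]) (auto simp: found_carrier embed_def)
  qed
qed

lemma bij_betw_embed: "bij_betw (\<phi> \<circ> embed) (prop_carrier found_Q num_seeds seed) X"
  unfolding bij_betw_def
proof
  show "inj_on (\<phi> \<circ> embed) (prop_carrier found_Q num_seeds seed)"
    using embed_eqv embed_in_L by (auto simp: inj_on_def eqv_def)
  show "(\<phi> \<circ> embed) ` prop_carrier found_Q num_seeds seed = X"
  proof
    show "(\<phi> \<circ> embed) ` prop_carrier found_Q num_seeds seed \<subseteq> X"
      using embed_in_L image_L by auto
    show "X \<subseteq> (\<phi> \<circ> embed) ` prop_carrier found_Q num_seeds seed"
    proof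
      fix x assume "x \<in> X"
      then obtain u where "u \<in> L" "x = \<phi> u" using image_L by blast
      with eqv_embed[OF \<open>u \<in> L\<close>] show "x \<in> (\<phi> \<circ> embed) ` prop_carrier found_Q num_seeds seed"
        by (metis comp_apply eqv_def rev_image_eqI)
    qed
  qed
qed

lemma found_prop_rel_iff:
  assumes "a \<in> prop_carrier found_Q num_seeds seed" "b \<in> prop_carrier found_Q num_seeds seed"
  shows "(a, b) \<in> prop_rel found_Q found_rho num_seeds seed \<longleftrightarrow> rel (embed a) (embed b)"
proof -
  have rho_core_seed: "(q, seed k (if i = 1 then 1 else 2)) \<in> found_rho \<longleftrightarrow> rel q (seed k i)"
    and rho_seed_core: "(seed k (if i = 1 then 1 else 2), q) \<in> found_rho \<longleftrightarrow> rel (seed k i) q"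
    if "q \<in> core" "k < num_seeds" "1 \<le> i" for q k i
    using that rel_core_seed[of q i k]
    by (simp_all add: found_rho_iff core_in_found_Q seed_in_found_Q)
  from assms consider
      (core_core) q q' where "a = Inl q" "b = Inl q'" "q \<in> core" "q' \<in> core"
    | (core_seed) q l j where "a = Inl q" "b = Inr (l, j)" "q \<in> core" "l < num_seeds" "1 \<le> j"
    | (seed_core) k i q where "a = Inr (k, i)" "b = Inl q" "k < num_seeds" "1 \<le> i" "q \<in> core"
    | (seed_seed) k i l j where "a = Inr (k, i)" "b = Inr (l, j)" "k < num_seeds" "1 \<le> i"
        "l < num_seeds" "1 \<le> j"
    by (auto simp: found_carrier)
  then show ?thesis
  proof cases
    case core_core then show ?thesis
      by (simp add: prop_rel_Inl_Inl found_Q_minus_seeds embed_def found_rho_iff core_in_found_Q)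
  next
    case core_seed then show ?thesis
      using rho_core_seed[of q l j] by (simp add: prop_rel_Inl_Inr found_Q_minus_seeds embed_def)
  next
    case seed_core then show ?thesis
      using rho_seed_core[of q k i] by (simp add: prop_rel_Inr_Inl found_Q_minus_seeds embed_def)
  next
    case seed_seed then show ?thesis
      by (simp add: prop_rel_Inr_Inr embed_def rel_seed_eq_prop_seed_rel)
  qed
qed

lemma exists_foundational_propagation:
  assumes "partial_order_on X R"
  shows "\<exists>(Q::nat set) \<rho> n p.
    unary_FA_foundational_po Q \<rho> n p \<and>
    (\<forall>k<n. seed_antichain \<rho> p k \<or> seed_ascending \<rho> p k \<or> seed_descending \<rho> p k) \<and>
    rel_isomorphic X R (prop_carrier Q n p) (prop_rel Q \<rho> n p)"
proof (intro exI conjI)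
  show "unary_FA_foundational_po found_Q found_rho num_seeds seed"
    using found_unary_FA_foundational found_partial_order[OF assms]
    by (simp add: unary_FA_foundational_po_def)
  show "\<forall>k<num_seeds. seed_antichain found_rho seed k \<or> seed_ascending found_rho seed k \<or>
      seed_descending found_rho seed k"
    using seed_shape by blast
  show "rel_isomorphic X R (prop_carrier found_Q num_seeds seed) (prop_rel found_Q found_rho num_seeds seed)"
    by (rule rel_isomorphic_if_bij_betw[OF bij_betw_embed])
      (simp add: found_prop_rel_iff rel_def embed_in_L)
qed

end

lemma foundational_propagation_if_unary_FA_presentable:
  assumes "partial_order_on X R" "unary_FA_presentable X R"
  shows "\<exists>(Q::nat set) \<rho> n p.
    unary_FA_foundational_po Q \<rho> n p \<and>
    (\<forall>k<n. seed_antichain \<rho> p k \<or> seed_ascending \<rho> p k \<or> seed_descending \<rho> p k) \<and>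
    rel_isomorphic X R (prop_carrier Q n p) (prop_rel Q \<rho> n p)"
proof -
  obtain L :: "nat set" and \<phi> :: "nat \<Rightarrow> 'a" where "\<phi> ` L = X"
    and reg_eq: "regular {conv u v | u v. u \<in> L \<and> v \<in> L \<and> \<phi> u = \<phi> v}"
    and reg_rel: "regular {conv u v | u v. u \<in> L \<and> v \<in> L \<and> (\<phi> u, \<phi> v) \<in> R}"
    using assms(2) unfolding unary_FA_presentable_def by blast
  obtain T1 P1 where "ultimately_periodic T1 P1 (\<lambda>u v. u \<in> L \<and> v \<in> L \<and> \<phi> u = \<phi> v)"
    using regular_imp_ultimately_periodic[OF reg_eq] unfolding mem_conv_set_iff .
  moreover obtain T2 P2 where "ultimately_periodic T2 P2 (\<lambda>u v. u \<in> L \<and> v \<in> L \<and> (\<phi> u, \<phi> v) \<in> R)"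
    using regular_imp_ultimately_periodic[OF reg_rel] unfolding mem_conv_set_iff .
  ultimately obtain T P where "T \<le> P"
    "ultimately_periodic T P (\<lambda>u v. u \<in> L \<and> v \<in> L \<and> \<phi> u = \<phi> v)"
    "ultimately_periodic T P (\<lambda>u v. u \<in> L \<and> v \<in> L \<and> (\<phi> u, \<phi> v) \<in> R)"
    by (rule ultimately_periodic_common)
  with \<open>\<phi> ` L = X\<close> have "periodic_presentation X R L \<phi> T P"
    by unfold_locales
  then show ?thesis
    using assms(1) by (rule periodic_presentation.exists_foundational_propagation)
qed

theorem theorem5p10:
  fixes X :: "'a set" and R :: "('a \<times> 'a) set"
  assumes "partial_order_on X R"
  shows "unary_FA_presentable X R \<longleftrightarrow>
    (\<exists>(Q::nat set) \<rho> n p.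
       unary_FA_foundational_po Q \<rho> n p \<and>
       (\<forall>k<n. seed_antichain \<rho> p k \<or> seed_ascending \<rho> p k \<or> seed_descending \<rho> p k) \<and>
       rel_isomorphic X R (prop_carrier Q n p) (prop_rel Q \<rho> n p))"
proof
  assume "unary_FA_presentable X R"
  with assms show "\<exists>(Q::nat set) \<rho> n p. unary_FA_foundational_po Q \<rho> n p \<and>
      (\<forall>k<n. seed_antichain \<rho> p k \<or> seed_ascending \<rho> p k \<or> seed_descending \<rho> p k) \<and>
      rel_isomorphic X R (prop_carrier Q n p) (prop_rel Q \<rho> n p)"
    by (rule foundational_propagation_if_unary_FA_presentable)
next
  assume "\<exists>(Q::nat set) \<rho> n p. unary_FA_foundational_po Q \<rho> n p \<and>
      (\<forall>k<n. seed_antichain \<rho> p k \<or> seed_ascending \<rho> p k \<or> seed_descending \<rho> p k) \<and>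
      rel_isomorphic X R (prop_carrier Q n p) (prop_rel Q \<rho> n p)"
  then obtain Q :: "nat set" and \<rho> n p where "unary_FA_foundational_po Q \<rho> n p"
    and "rel_isomorphic X R (prop_carrier Q n p) (prop_rel Q \<rho> n p)"
    by blast
  then show "unary_FA_presentable X R"
    by (intro unary_FA_presentable_if_propagation)
      (simp_all add: unary_FA_foundational_po_def unary_FA_foundational_def)
qed

end
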